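(* Let $H$ be the graph consisting of three vertex-disjoint copies of $K_{4,4}$. Then the complement $\overline{H}$ is not a $2$-AND-PCG.
   Context: All trees are unrooted with edges weighted by nonnegative reals; $d_T(u,v)$ is the weight of the path between leaves $u,v$ of $T$. A graph $G$ is a PCG if there exist a tree $T$ with leaf set $V(G)$ and an interval $I$ of nonnegative reals such that $\{u,v\}\in E(G)$ iff $d_T(u,v)\in I$. A graph $G=(V,E)$ is a $k$-AND-PCG if there exist $k$ PCGs $G_1,\ldots,G_k$ on vertex set $V$ with $E=\bigcap_i E(G_i)$. *)

theory Defs
  imports Complex_Main
begin

definition consec_edges :: "'n list \<Rightarrow> 'n set list" where
  "consec_edges p = map (\<lambda>(a,b). {a,b}) (zip p (tl p))"

definition is_path :: "'n set set \<Rightarrow> 'n list \<Rightarrow> 'n \<Rightarrow> 'n \<Rightarrow> bool" where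
  "is_path Et p u v \<longleftrightarrow> p \<noteq> [] \<and> hd p = u \<and> last p = v \<and> distinct p \<and>
     set (consec_edges p) \<subseteq> Et"

definition is_cycle :: "'n set set \<Rightarrow> 'n list \<Rightarrow> bool" where
  "is_cycle Et c \<longleftrightarrow> length c \<ge> 3 \<and> distinct c \<and> set (consec_edges c) \<subseteq> Et \<and>
     {last c, hd c} \<in> Et"

definition is_tree :: "'n set \<Rightarrow> 'n set set \<Rightarrow> bool" where
  "is_tree Vt Et \<longleftrightarrow> finite Vt \<and> Vt \<noteq> {} \<and>
     Et \<subseteq> {{a,b} | a b. a \<in> Vt \<and> b \<in> Vt \<and> a \<noteq> b} \<and>
     (\<forall>u\<in>Vt. \<forall>v\<in>Vt. \<exists>p. is_path Et p u v) \<and>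
     \<not> (\<exists>c. is_cycle Et c)"

definition tree_leaves :: "'n set \<Rightarrow> 'n set set \<Rightarrow> 'n set" where
  "tree_leaves Vt Et = {v \<in> Vt. card {u \<in> Vt. {u,v} \<in> Et} = 1}"

definition path_weight :: "('n set \<Rightarrow> real) \<Rightarrow> 'n list \<Rightarrow> real" where
  "path_weight w p = sum_list (map w (consec_edges p))"

definition tree_dist :: "'n set set \<Rightarrow> ('n set \<Rightarrow> real) \<Rightarrow> 'n \<Rightarrow> 'n \<Rightarrow> real" where
  "tree_dist Et w u v = path_weight w (THE p. is_path Et p u v)"

definition real_interval :: "real set \<Rightarrow> bool" where
  "real_interval I \<longleftrightarrow> (\<forall>x\<in>I. \<forall>z\<in>I. \<forall>y. x \<le> y \<and> y \<le> z \<longrightarrow> y \<in> I)"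

definition all_pairs :: "'a set \<Rightarrow> 'a set set" where
  "all_pairs V = {{u,v} | u v. u \<in> V \<and> v \<in> V \<and> u \<noteq> v}"

definition is_PCG :: "'a set \<Rightarrow> 'a set set \<Rightarrow> bool" where
  "is_PCG V E \<longleftrightarrow> E \<subseteq> all_pairs V \<and>
    (\<exists>(Vt :: nat set) Et w (f :: 'a \<Rightarrow> nat) (I :: real set).
       is_tree Vt Et \<and> (\<forall>e\<in>Et. w e \<ge> 0) \<and>
       bij_betw f V (tree_leaves Vt Et) \<and>
       real_interval I \<and> I \<subseteq> {0..} \<and>
       (\<forall>u\<in>V. \<forall>v\<in>V. u \<noteq> v \<longrightarrow> ({u,v} \<in> E \<longleftrightarrow> tree_dist Et w (f u) (f v) \<in> I)))"

definition is_k_AND_PCG :: "nat \<Rightarrow> 'a set \<Rightarrow> 'a set set \<Rightarrow> bool" where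
  "is_k_AND_PCG k V E \<longleftrightarrow>
    (\<exists>Es :: nat \<Rightarrow> 'a set set. (\<forall>i<k. is_PCG V (Es i)) \<and> E = (\<Inter>i\<in>{..<k}. Es i))"

text \<open>Vertex (c, s, i): copy c in {0,1,2}, side s, index i in {0..3}.\<close>
definition H3_V :: "(nat \<times> bool \<times> nat) set" where
  "H3_V = {0..<3} \<times> UNIV \<times> {0..<4}"

definition H3_E :: "(nat \<times> bool \<times> nat) set set" where
  "H3_E = {{(c, s, i), (c, \<not> s, j)} | c s i j. c < 3 \<and> i < 4 \<and> j < 4}"

definition H3_compl_E :: "(nat \<times> bool \<times> nat) set set" where
  "H3_compl_E = all_pairs H3_V - H3_E"

end

(*
  Suppose the complement of H = 3 K_{4,4} is the intersection of two PCGs, with trees T_0, T_1 and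
  intervals I_0, I_1. Leaf distances in a tree satisfy the four-point condition. Every non-edge of
  H has both distances inside the intervals, and every edge of H has some distance outside, i.e.
  strictly below or strictly above I_k. Two edges of H in different copies that are both above I_k
  contradict the four-point condition, since their four cross distances lie in I_k; so some copy
  has no edge above either interval, and each of its 16 edges lies below I_0 or below I_1.
  For a four-point metric, the pairs below an interval form a graph without chordless cycles of
  length at least 4; within one copy this graph is also bipartite, since pairs on the same side are
  non-edges of H. Hence it is a forest on 8 vertices, and two such forests have at most 14 edges.
*)

theory Submission
  imports Defs
begin

lemma consec_edges_singleton [simp]: "consec_edges [a] = []"
  by (simp add: consec_edges_def)

lemma consec_edges_Cons_Cons [simp]: "consec_edges (a # b # q) = {a,b} # consec_edges (b # q)"
  by (simp add: consec_edges_def)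

lemma length_consec_edges [simp]: "length (consec_edges p) = length p - 1"
  by (simp add: consec_edges_def)

lemma nth_consec_edges: "Suc i < length p \<Longrightarrow> consec_edges p ! i = {p ! i, p ! Suc i}"
  by (simp add: consec_edges_def nth_tl)

lemma set_consec_edges: "set (consec_edges p) = {{p ! i, p ! Suc i} | i. Suc i < length p}"
proof -
  have "\<And>i. i < length (consec_edges p) \<longleftrightarrow> Suc i < length p"
    by auto
  then show ?thesis
    unfolding set_conv_nth by (metis (no_types, opaque_lifting) nth_consec_edges)
qed

lemma consec_edges_rev: "consec_edges (rev p) = rev (consec_edges p)"
  by (rule nth_equalityI) (auto simp: nth_consec_edges rev_nth insert_commute Suc_diff_Suc)

lemma path_weight_singleton [simp]: "path_weight w [a] = 0"
  by (simp add: path_weight_def)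

lemma path_weight_Cons_Cons [simp]: "path_weight w (a # b # q) = w {a,b} + path_weight w (b # q)"
  by (simp add: path_weight_def)

lemma path_weight_rev: "path_weight w (rev p) = path_weight w p"
  by (simp add: path_weight_def consec_edges_rev rev_map[symmetric])

lemma is_path_rev: "is_path E p u v \<Longrightarrow> is_path E (rev p) v u"
  by (simp add: is_path_def consec_edges_rev hd_rev last_rev)

lemma is_path_same: "is_path E p u u \<Longrightarrow> p = [u]"
  by (cases p) (auto simp: is_path_def split: if_splits)

lemma is_cycle_mono: "is_cycle S c \<Longrightarrow> S \<subseteq> S' \<Longrightarrow> is_cycle S' c"
  by (auto simp: is_cycle_def)

lemma is_cycle_segment:
  assumes "distinct q" "set (consec_edges q) \<subseteq> S" "i + 2 \<le> j" "j < length q"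
    and "{q ! j, q ! i} \<in> S"
  shows "is_cycle S (drop i (take (Suc j) q))"
proof -
  let ?c = "drop i (take (Suc j) q)"
  have "hd ?c = q ! i" "last ?c = q ! j"
    using assms(3,4) by (simp_all add: hd_drop_conv_nth last_conv_nth)
  moreover have "set (consec_edges ?c) \<subseteq> set (consec_edges q)"
    using assms(3,4) by (auto simp: set_consec_edges)
  ultimately show ?thesis
    using assms by (auto simp: is_cycle_def)
qed

lemma edge_mem_consec_edges: "{a,b} \<in> set (consec_edges (xs @ a # b # ys))"
  by (auto simp: set_consec_edges nth_append intro!: exI[of _ "length xs"])

lemma consec_edges_subset_set: "e \<in> set (consec_edges q) \<Longrightarrow> e \<subseteq> set q"
  by (auto simp: set_consec_edges)

lemma pair_in_all_pairs: "{a,b} \<in> all_pairs V \<Longrightarrow> a \<noteq> b \<and> a \<in> V \<and> b \<in> V"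
  by (auto simp: all_pairs_def doubleton_eq_iff)

lemma finite_all_pairs: "finite V \<Longrightarrow> finite (all_pairs V)"
  by (rule finite_subset[of _ "Pow V"]) (auto simp: all_pairs_def)

lemma acyclic_walk_start_neighbour:
  assumes "\<nexists>c. is_cycle S c" "distinct (l # p # r)" "set (consec_edges (l # p # r)) \<subseteq> S"
    and "{l,z} \<in> S" "z \<noteq> l" "z \<noteq> p"
  shows "z \<notin> set (l # p # r)"
proof
  let ?q = "l # p # r"
  assume "z \<in> set ?q"
  then obtain j where j: "j < length ?q" "?q ! j = z"
    by (metis in_set_conv_nth)
  moreover have "j \<noteq> 0" "j \<noteq> 1"
    using j(2) assms(5,6) by (metis nth_Cons_0, metis One_nat_def nth_Cons_0 nth_Cons_Suc)
  ultimately have "is_cycle S (drop 0 (take (Suc j) ?q))"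
    using assms(2-4) by (intro is_cycle_segment) (auto simp: insert_commute)
  then show False
    using assms(1) by blast
qed

text \<open>The first vertex of a longest walk has no neighbour besides the second one.\<close>
lemma acyclic_has_pendant_edge:
  assumes "finite V" "S \<subseteq> all_pairs V" "S \<noteq> {}" "\<nexists>c. is_cycle S c"
  obtains l p where "{l,p} \<in> S" "\<forall>e\<in>S. l \<in> e \<longrightarrow> e = {l,p}"
proof -
  define walk where "walk q \<longleftrightarrow> distinct q \<and> set q \<subseteq> V \<and> set (consec_edges q) \<subseteq> S" for q
  have walk_short: "length q < Suc (card V)" if "walk q" for q
    using that card_mono[OF assms(1)] distinct_card unfolding walk_def by (metis less_Suc_eq_le)
  obtain a b where "{a,b} \<in> S"
    using assms(2,3) unfolding all_pairs_def by blast
  then have "walk [a,b]"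
    using assms(2) pair_in_all_pairs unfolding walk_def by fastforce
  then obtain q where q: "walk q" and longest: "\<And>q'. walk q' \<Longrightarrow> length q' \<le> length q"
    using ex_has_greatest_nat[of walk "[a,b]" length "Suc (card V)"] walk_short by metis
  then have "2 \<le> length q"
    using \<open>walk [a,b]\<close> by fastforce
  then obtain l p r where qlpr: "q = l # p # r"
    by (metis Suc_le_length_iff numeral_2_eq_2)
  have "e = {l,p}" if e: "e \<in> S" "l \<in> e" for e
  proof (rule ccontr)
    assume "e \<noteq> {l,p}"
    then obtain z where z: "e = {l,z}" "z \<in> V" "z \<noteq> l" "z \<noteq> p"
      using e assms(2) unfolding all_pairs_def by auto
    then have "z \<notin> set q"
      using acyclic_walk_start_neighbour[OF assms(4)] q e qlpr unfolding walk_def by blast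
    then have "walk (z # q)"
      using q e z qlpr unfolding walk_def by (auto simp: insert_commute)
    then show False
      using longest[of "z # q"] by simp
  qed
  moreover have "{l,p} \<in> S"
    using q qlpr unfolding walk_def by simp
  ultimately show thesis
    using that by blast
qed

lemma card_acyclic_less:
  assumes "finite V" "V \<noteq> {}" "S \<subseteq> all_pairs V" "\<nexists>c. is_cycle S c"
  shows "card S < card V"
  using assms
proof (induction "card V" arbitrary: V S rule: less_induct)
  case less
  show ?case
  proof (cases "S = {}")
    case True
    then show ?thesis
      using less.prems by (simp add: card_gt_0_iff)
  next
    case False
    then obtain l p where lp: "{l,p} \<in> S" and pendant: "\<forall>e\<in>S. l \<in> e \<longrightarrow> e = {l,p}"
      using acyclic_has_pendant_edge[OF less.prems(1,3) False less.prems(4)] by blast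
    have l: "l \<in> V" "p \<in> V" "l \<noteq> p"
      using lp less.prems(3) pair_in_all_pairs by (meson subsetD)+
    have "S - {{l,p}} \<subseteq> all_pairs (V - {l})"
      using less.prems(3) pendant unfolding all_pairs_def by fastforce
    moreover have "\<nexists>c. is_cycle (S - {{l,p}}) c"
      using less.prems(4) is_cycle_mono by blast
    moreover have "card (V - {l}) < card V"
      using less.prems(1) l(1) by (rule card_Diff1_less)
    moreover have "V - {l} \<noteq> {}"
      using l by blast
    ultimately have "card (S - {{l,p}}) < card (V - {l})"
      using less.prems(1) by (intro less.hyps) auto
    moreover have "finite S"
      using less.prems(1,3) finite_all_pairs finite_subset by blast
    ultimately show ?thesis
      using lp l(1) less.prems(1) by (simp add: card_Diff_singleton)
  qed
qed

lemma card_acyclic_union_less: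
  assumes "finite V" "V \<noteq> {}" "S \<subseteq> all_pairs V" "S' \<subseteq> all_pairs V"
    and "\<nexists>c. is_cycle S c" "\<nexists>c. is_cycle S' c"
  shows "card (S \<union> S') < 2 * card V - 1"
proof -
  have "card S < card V" "card S' < card V"
    using assms card_acyclic_less by blast+
  moreover have "card (S \<union> S') \<le> card S + card S'"
    by (rule card_Un_le)
  ultimately show ?thesis
    by linarith
qed

lemma tree_edges_subset: "is_tree Vt Et \<Longrightarrow> Et \<subseteq> all_pairs Vt"
  unfolding is_tree_def all_pairs_def by blast

lemma tree_has_pendant_edge:
  assumes T: "is_tree Vt Et" and "u \<in> Vt" "v \<in> Vt" "u \<noteq> v"
  obtains l p where "l \<in> Vt" "p \<in> Vt" "l \<noteq> p" "{l,p} \<in> Et" "\<forall>e\<in>Et. l \<in> e \<longrightarrow> e = {l,p}"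
proof -
  obtain q where q: "is_path Et q u v"
    using assms unfolding is_tree_def by blast
  then obtain b r where "q = u # b # r"
    using \<open>u \<noteq> v\<close> unfolding is_path_def by (cases q; cases "tl q") auto
  then have "Et \<noteq> {}"
    using q unfolding is_path_def by auto
  moreover have "finite Vt" "\<nexists>c. is_cycle Et c"
    using T unfolding is_tree_def by auto
  ultimately obtain l p where "{l,p} \<in> Et" "\<forall>e\<in>Et. l \<in> e \<longrightarrow> e = {l,p}"
    using T tree_edges_subset acyclic_has_pendant_edge by metis
  moreover have "l \<in> Vt" "p \<in> Vt" "l \<noteq> p"
    using calculation(1) T tree_edges_subset pair_in_all_pairs by (meson subsetD)+
  ultimately show thesis
    using that by blast
qed

lemma path_avoids_pendant:
  assumes P: "is_path E q u v" and "u \<noteq> l" "v \<noteq> l" and pendant: "\<forall>e\<in>E. l \<in> e \<longrightarrow> e = {l,p}"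
  shows "l \<notin> set q"
proof
  assume "l \<in> set q"
  then obtain xs ys where q: "q = xs @ l # ys"
    by (meson split_list)
  moreover have "xs \<noteq> []" "ys \<noteq> []"
    using P q \<open>u \<noteq> l\<close> \<open>v \<noteq> l\<close> unfolding is_path_def by auto
  then obtain xs' a b ys' where "xs = xs' @ [a]" "ys = b # ys'"
    by (metis neq_Nil_conv rev_exhaust)
  ultimately have q': "q = xs' @ a # l # b # ys'"
    by simp
  then have "{a,l} \<in> E" "{l,b} \<in> E"
    using P edge_mem_consec_edges[of a l xs'] edge_mem_consec_edges[of l b "xs' @ [a]"]
    unfolding is_path_def by auto
  moreover have "a \<noteq> l" "b \<noteq> l" "a \<noteq> b"
    using P q' unfolding is_path_def by auto
  ultimately have "a = p" "b = p"
    using pendant by (metis doubleton_eq_iff insertI1)+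
  with \<open>a \<noteq> b\<close> show False
    by simp
qed

lemma is_path_remove_edge:
  assumes "is_path E q u v" "l \<notin> set q"
  shows "is_path (E - {{l,p}}) q u v"
  using assms consec_edges_subset_set unfolding is_path_def by fastforce

lemma path_from_pendant:
  assumes P: "is_path E q l z" and "z \<noteq> l" and pendant: "\<forall>e\<in>E. l \<in> e \<longrightarrow> e = {l,p}"
  obtains r where "q = l # p # r" "is_path (E - {{l,p}}) (p # r) p z"
proof -
  obtain b r where q: "q = l # b # r"
    using P \<open>z \<noteq> l\<close> unfolding is_path_def by (cases q; cases "tl q") auto
  then have "b = p"
    using P pendant unfolding is_path_def by (auto simp: doubleton_eq_iff)
  moreover have "is_path E (b # r) b z" "l \<notin> set (b # r)"
    using P q unfolding is_path_def by auto
  ultimately have "is_path (E - {{l,p}}) (p # r) p z"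
    by (metis is_path_remove_edge)
  with q \<open>b = p\<close> show thesis
    using that by blast
qed

lemma is_tree_remove_pendant:
  assumes T: "is_tree Vt Et" and "p \<in> Vt" "l \<noteq> p" and pendant: "\<forall>e\<in>Et. l \<in> e \<longrightarrow> e = {l,p}"
  shows "is_tree (Vt - {l}) (Et - {{l,p}})"
  unfolding is_tree_def
proof (intro conjI ballI)
  show "finite (Vt - {l})" "Vt - {l} \<noteq> {}"
    using assms unfolding is_tree_def by auto
  show "Et - {{l,p}} \<subseteq> {{a,b} | a b. a \<in> Vt - {l} \<and> b \<in> Vt - {l} \<and> a \<noteq> b}"
    using T pendant unfolding is_tree_def by fastforce
  show "\<exists>q. is_path (Et - {{l,p}}) q u v" if uv: "u \<in> Vt - {l}" "v \<in> Vt - {l}" for u v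
  proof -
    obtain q where q: "is_path Et q u v"
      using T uv unfolding is_tree_def by blast
    then have "l \<notin> set q"
      using path_avoids_pendant[OF q _ _ pendant] uv by blast
    then show ?thesis
      using is_path_remove_edge[OF q] by blast
  qed
  show "\<nexists>c. is_cycle (Et - {{l,p}}) c"
    using T is_cycle_mono unfolding is_tree_def by blast
qed

lemma path_unique_remove_pendant:
  assumes pendant: "\<forall>e\<in>E. l \<in> e \<longrightarrow> e = {l,p}" and p: "p \<in> V" "p \<noteq> l"
    and unique: "\<And>x y r r'. x \<in> V - {l} \<Longrightarrow> y \<in> V - {l} \<Longrightarrow>
        is_path (E - {{l,p}}) r x y \<Longrightarrow> is_path (E - {{l,p}}) r' x y \<Longrightarrow> r = r'"
    and uv: "u \<in> V" "v \<in> V" and q: "is_path E q u v" "is_path E q' u v" and "u \<noteq> v"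
  shows "q = q'"
proof -
  have from_pendant: "r = r'" if r: "is_path E r l z" "is_path E r' l z" and z: "z \<in> V" "z \<noteq> l"
    for r r' z
  proof -
    obtain s where s: "r = l # p # s" "is_path (E - {{l,p}}) (p # s) p z"
      using path_from_pendant[OF r(1) z(2) pendant] by metis
    obtain s' where s': "r' = l # p # s'" "is_path (E - {{l,p}}) (p # s') p z"
      using path_from_pendant[OF r(2) z(2) pendant] by metis
    have "p # s = p # s'"
      using unique[OF _ _ s(2) s'(2)] p z by blast
    then show ?thesis
      using s s' by simp
  qed
  consider "u = l" | "v = l" | "u \<noteq> l" "v \<noteq> l"
    by blast
  then show ?thesis
  proof cases
    case 1
    then show ?thesis
      using from_pendant[of q v q'] uv q \<open>u \<noteq> v\<close> by blast
  next
    case 2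
    then have "is_path E (rev q) l u" "is_path E (rev q') l u"
      using q by (simp_all add: is_path_rev)
    then have "rev q = rev q'"
      using from_pendant uv \<open>u \<noteq> v\<close> 2 by blast
    then show ?thesis
      by simp
  next
    case 3
    then have "l \<notin> set q" "l \<notin> set q'"
      using path_avoids_pendant[OF q(1) _ _ pendant] path_avoids_pendant[OF q(2) _ _ pendant] by blast+
    then have "is_path (E - {{l,p}}) q u v" "is_path (E - {{l,p}}) q' u v"
      using is_path_remove_edge q by metis+
    then show ?thesis
      using unique uv 3 by blast
  qed
qed

lemma tree_path_unique:
  assumes "is_tree Vt Et" "u \<in> Vt" "v \<in> Vt" "is_path Et q u v" "is_path Et q' u v"
  shows "q = q'"
  using assms
proof (induction "card Vt" arbitrary: Vt Et u v q q' rule: less_induct)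
  case less
  note T = less.prems(1)
  show ?case
  proof (cases "u = v")
    case True
    then show ?thesis
      using is_path_same[of Et q u] is_path_same[of Et q' u] less.prems(4,5) by simp
  next
    case False
    obtain l p where l: "l \<in> Vt" "p \<in> Vt" "l \<noteq> p" "{l,p} \<in> Et"
      and pendant: "\<forall>e\<in>Et. l \<in> e \<longrightarrow> e = {l,p}"
      by (rule tree_has_pendant_edge[OF T less.prems(2,3) False])
    have T': "is_tree (Vt - {l}) (Et - {{l,p}})"
      using T l(2,3) pendant by (rule is_tree_remove_pendant)
    have smaller: "card (Vt - {l}) < card Vt"
      using T l(1) by (intro card_Diff1_less) (simp_all add: is_tree_def)
    show ?thesis
    proof (rule path_unique_remove_pendant[OF pendant l(2) l(3)[symmetric] _ less.prems(2-5) False])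
      show "r = r'" if "x \<in> Vt - {l}" "y \<in> Vt - {l}"
        "is_path (Et - {{l,p}}) r x y" "is_path (Et - {{l,p}}) r' x y" for x y r r'
        using less.hyps[OF smaller T' that] .
    qed
  qed
qed

lemma tree_dist_path_weight:
  assumes "is_tree Vt Et" "u \<in> Vt" "v \<in> Vt" "is_path Et q u v"
  shows "tree_dist Et w u v = path_weight w q"
proof -
  have "(THE q. is_path Et q u v) = q"
    using assms(4) tree_path_unique[OF assms(1-3) _ assms(4)] by (rule the_equality)
  then show ?thesis
    unfolding tree_dist_def by simp
qed

lemma tree_has_path: "is_tree Vt Et \<Longrightarrow> u \<in> Vt \<Longrightarrow> v \<in> Vt \<Longrightarrow> \<exists>q. is_path Et q u v"
  by (simp add: is_tree_def)

lemma tree_dist_self: "is_tree Vt Et \<Longrightarrow> u \<in> Vt \<Longrightarrow> tree_dist Et w u u = 0"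
  using tree_dist_path_weight[of Vt Et u u "[u]"] by (simp add: is_path_def)

lemma tree_dist_sym:
  assumes "is_tree Vt Et" "u \<in> Vt" "v \<in> Vt"
  shows "tree_dist Et w u v = tree_dist Et w v u"
proof -
  obtain q where "is_path Et q u v"
    using tree_has_path[OF assms] by blast
  then show ?thesis
    using tree_dist_path_weight[OF assms] tree_dist_path_weight[OF assms(1,3,2)]
    by (metis is_path_rev path_weight_rev)
qed

lemma tree_dist_remove_pendant:
  assumes T: "is_tree Vt Et" and "p \<in> Vt" "l \<noteq> p" and pendant: "\<forall>e\<in>Et. l \<in> e \<longrightarrow> e = {l,p}"
    and x: "x \<in> Vt - {l}" and y: "y \<in> Vt - {l}"
  shows "tree_dist Et w x y = tree_dist (Et - {{l,p}}) w x y"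
proof -
  obtain q where q: "is_path Et q x y"
    using T x y tree_has_path by (meson DiffD1)
  then have "l \<notin> set q"
    using path_avoids_pendant[OF q _ _ pendant] x y by simp
  then have "is_path (Et - {{l,p}}) q x y"
    by (rule is_path_remove_edge[OF q])
  moreover have "is_tree (Vt - {l}) (Et - {{l,p}})"
    using T assms(2,3) pendant by (rule is_tree_remove_pendant)
  ultimately show ?thesis
    using T q x y tree_dist_path_weight by (metis DiffD1)
qed

lemma tree_dist_from_pendant:
  assumes T: "is_tree Vt Et" and "l \<in> Vt" "p \<in> Vt" "l \<noteq> p"
    and pendant: "\<forall>e\<in>Et. l \<in> e \<longrightarrow> e = {l,p}" and y: "y \<in> Vt - {l}"
  shows "tree_dist Et w l y = w {l,p} + tree_dist (Et - {{l,p}}) w p y"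
proof -
  obtain q where q: "is_path Et q l y"
    using T assms(2) y tree_has_path by (meson DiffD1)
  then obtain r where r: "q = l # p # r" "is_path (Et - {{l,p}}) (p # r) p y"
    using path_from_pendant[OF q _ pendant] y by blast
  moreover have "is_tree (Vt - {l}) (Et - {{l,p}})"
    using T assms(3,4) pendant by (rule is_tree_remove_pendant)
  ultimately show ?thesis
    using T q assms(2,3,4) y tree_dist_path_weight by (metis DiffD1 DiffI path_weight_Cons_Cons singletonD)
qed

lemma tree_dist_pendant:
  assumes T: "is_tree Vt Et" and l: "l \<in> Vt" "p \<in> Vt" "l \<noteq> p"
    and pendant: "\<forall>e\<in>Et. l \<in> e \<longrightarrow> e = {l,p}" and xy: "x \<in> Vt" "y \<in> Vt" "x \<noteq> y"
  shows "tree_dist Et w x y = (if x = l then w {l,p} else 0) + (if y = l then w {l,p} else 0) +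
    tree_dist (Et - {{l,p}}) w (if x = l then p else x) (if y = l then p else y)"
proof -
  consider "x = l" | "y = l" | "x \<noteq> l" "y \<noteq> l"
    by blast
  then show ?thesis
  proof cases
    case 1
    then show ?thesis
      using tree_dist_from_pendant[OF T l pendant, of y w] xy by simp
  next
    case 2
    have "is_tree (Vt - {l}) (Et - {{l,p}})"
      using T l(2,3) pendant by (rule is_tree_remove_pendant)
    then have "tree_dist (Et - {{l,p}}) w p x = tree_dist (Et - {{l,p}}) w x p"
      using tree_dist_sym l xy 2 by (metis DiffI singletonD)
    moreover have "tree_dist Et w x y = tree_dist Et w l x"
      using tree_dist_sym[OF T xy(1,2)] 2 by simp
    ultimately show ?thesis
      using tree_dist_from_pendant[OF T l pendant, of x w] xy 2 by simp
  next
    case 3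
    then show ?thesis
      using tree_dist_remove_pendant[OF T l(2,3) pendant] xy by simp
  qed
qed

definition four_point_metric :: "'a set \<Rightarrow> ('a \<Rightarrow> 'a \<Rightarrow> real) \<Rightarrow> bool" where
  "four_point_metric V D \<longleftrightarrow> (\<forall>x\<in>V. D x x = 0) \<and> (\<forall>x\<in>V. \<forall>y\<in>V. D x y = D y x) \<and>
     (\<forall>a\<in>V. \<forall>b\<in>V. \<forall>c\<in>V. \<forall>d\<in>V. D a b + D c d \<le> max (D a c + D b d) (D a d + D b c))"

lemma four_point_metric_self: "four_point_metric V D \<Longrightarrow> x \<in> V \<Longrightarrow> D x x = 0"
  by (simp add: four_point_metric_def)

lemma four_point_metric_sym: "four_point_metric V D \<Longrightarrow> x \<in> V \<Longrightarrow> y \<in> V \<Longrightarrow> D x y = D y x"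
  by (simp add: four_point_metric_def)

lemma four_point_metric_four_point:
  "four_point_metric V D \<Longrightarrow> a \<in> V \<Longrightarrow> b \<in> V \<Longrightarrow> c \<in> V \<Longrightarrow> d \<in> V \<Longrightarrow>
    D a b + D c d \<le> max (D a c + D b d) (D a d + D b c)"
  unfolding four_point_metric_def by blast

lemma four_point_metric_triangle:
  assumes "four_point_metric V D" "x \<in> V" "y \<in> V" "z \<in> V"
  shows "D x y \<le> D x z + D z y"
  using four_point_metric_four_point[OF assms(1,2,3,4,4)]
    four_point_metric_self[OF assms(1,4)] four_point_metric_sym[OF assms(1,3,4)] by simp

lemma four_point_metric_nonneg:
  assumes "four_point_metric V D" "x \<in> V" "y \<in> V"
  shows "0 \<le> D x y"
  using four_point_metric_triangle[OF assms(1,2,2,3)]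
    four_point_metric_self[OF assms(1,2)] four_point_metric_sym[OF assms] by simp

lemma four_point_metric_subset: "four_point_metric V D \<Longrightarrow> U \<subseteq> V \<Longrightarrow> four_point_metric U D"
  unfolding four_point_metric_def by blast

lemma four_point_metric_comp:
  assumes "four_point_metric V D" "f ` U \<subseteq> V"
  shows "four_point_metric U (\<lambda>x y. D (f x) (f y))"
  using assms unfolding four_point_metric_def image_subset_iff by simp

text \<open>Degenerate quadruples follow from the triangle inequality.\<close>
lemma four_point_metricI_distinct:
  assumes self: "\<And>x. x \<in> V \<Longrightarrow> D x x = 0"
    and sym: "\<And>x y. x \<in> V \<Longrightarrow> y \<in> V \<Longrightarrow> D x y = D y x"
    and tri: "\<And>x y z. x \<in> V \<Longrightarrow> y \<in> V \<Longrightarrow> z \<in> V \<Longrightarrow> D x y \<le> D x z + D z y"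
    and distinct: "\<And>a b c d. a \<in> V \<Longrightarrow> b \<in> V \<Longrightarrow> c \<in> V \<Longrightarrow> d \<in> V \<Longrightarrow> distinct [a,b,c,d] \<Longrightarrow>
        D a b + D c d \<le> max (D a c + D b d) (D a d + D b c)"
  shows "four_point_metric V D"
  unfolding four_point_metric_def
proof (intro conjI ballI)
  fix a b c d assume V: "a \<in> V" "b \<in> V" "c \<in> V" "d \<in> V"
  show "D a b + D c d \<le> max (D a c + D b d) (D a d + D b c)"
  proof (cases "distinct [a,b,c,d]")
    case True
    then show ?thesis
      using V distinct by blast
  next
    case False
    then consider "a = b" | "a = c" | "a = d" | "b = c" | "b = d" | "c = d"
      by auto
    then show ?thesis
    proof cases
      case 1
      then show ?thesis
        using tri[of c d a] self sym[of c a] V by simp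
    next
      case 6
      then show ?thesis
        using tri[of a b c] self sym[of c b] V by simp
    qed (use sym[of b a] sym[of c a] sym[of c b] V in auto)
  qed
qed (use self sym in auto)

text \<open>Attaching each point \<open>x\<close> to \<open>\<phi> x\<close> by an edge of length \<open>\<delta> x\<close>; this undoes the removal
  of a pendant edge from a tree.\<close>
lemma four_point_metric_hang:
  assumes fpm: "four_point_metric V D'" and \<phi>: "\<phi> ` U \<subseteq> V" and \<delta>: "\<And>x. x \<in> U \<Longrightarrow> 0 \<le> \<delta> x"
    and self: "\<And>x. x \<in> U \<Longrightarrow> D x x = 0"
    and hang: "\<And>x y. x \<in> U \<Longrightarrow> y \<in> U \<Longrightarrow> x \<noteq> y \<Longrightarrow> D x y = \<delta> x + \<delta> y + D' (\<phi> x) (\<phi> y)"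
  shows "four_point_metric U D"
proof (rule four_point_metricI_distinct)
  have \<phi>U: "\<phi> x \<in> V" if "x \<in> U" for x
    using \<phi> that by blast
  show sym: "D x y = D y x" if "x \<in> U" "y \<in> U" for x y
    using that hang[of x y] hang[of y x] four_point_metric_sym[OF fpm \<phi>U \<phi>U] by (cases "x = y") auto
  have nonneg: "0 \<le> D x y" if "x \<in> U" "y \<in> U" for x y
    using that hang[of x y] self \<delta> four_point_metric_nonneg[OF fpm \<phi>U \<phi>U]
    by (cases "x = y") (auto intro: add_nonneg_nonneg)
  show "D x y \<le> D x z + D z y" if U: "x \<in> U" "y \<in> U" "z \<in> U" for x y z
  proof (cases "distinct [x,y,z]")
    case True
    then show ?thesis
      using U hang four_point_metric_triangle[OF fpm \<phi>U \<phi>U \<phi>U, of x y z] \<delta>[of z] by auto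
  next
    case False
    then show ?thesis
      using U self nonneg by auto
  qed
  show "D a b + D c d \<le> max (D a c + D b d) (D a d + D b c)"
    if U: "a \<in> U" "b \<in> U" "c \<in> U" "d \<in> U" and "distinct [a,b,c,d]" for a b c d
  proof -
    have "D' (\<phi> a) (\<phi> b) + D' (\<phi> c) (\<phi> d)
        \<le> max (D' (\<phi> a) (\<phi> c) + D' (\<phi> b) (\<phi> d)) (D' (\<phi> a) (\<phi> d) + D' (\<phi> b) (\<phi> c))"
      using four_point_metric_four_point[OF fpm \<phi>U \<phi>U \<phi>U \<phi>U] U .
    then show ?thesis
      using that hang by (auto simp: max_def)
  qed
qed (fact self)

lemma tree_dist_four_point_metric:
  assumes "is_tree Vt Et" "\<forall>e\<in>Et. 0 \<le> w e"
  shows "four_point_metric Vt (tree_dist Et w)"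
  using assms
proof (induction "card Vt" arbitrary: Vt Et rule: less_induct)
  case less
  note T = less.prems(1)
  show ?case
  proof (cases "\<exists>u\<in>Vt. \<exists>v\<in>Vt. u \<noteq> v")
    case False
    obtain u where "u \<in> Vt"
      using T unfolding is_tree_def by auto
    with False have "Vt = {u}"
      by blast
    then show ?thesis
      using tree_dist_self[OF T] by (simp add: four_point_metric_def)
  next
    case True
    then obtain u v where uv: "u \<in> Vt" "v \<in> Vt" "u \<noteq> v"
      by blast
    obtain l p where l: "l \<in> Vt" "p \<in> Vt" "l \<noteq> p" "{l,p} \<in> Et"
      and pendant: "\<forall>e\<in>Et. l \<in> e \<longrightarrow> e = {l,p}"
      by (rule tree_has_pendant_edge[OF T uv])
    have T': "is_tree (Vt - {l}) (Et - {{l,p}})"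
      using T l(2,3) pendant by (rule is_tree_remove_pendant)
    have smaller: "card (Vt - {l}) < card Vt"
      using T l(1) by (intro card_Diff1_less) (simp_all add: is_tree_def)
    have "\<forall>e\<in>Et - {{l,p}}. 0 \<le> w e"
      using less.prems(2) by blast
    with smaller T' have IH: "four_point_metric (Vt - {l}) (tree_dist (Et - {{l,p}}) w)"
      by (rule less.hyps)
    show ?thesis
    proof (rule four_point_metric_hang[where \<phi> = "\<lambda>x. if x = l then p else x"
          and \<delta> = "\<lambda>x. if x = l then w {l,p} else 0", OF IH])
      show "(\<lambda>x. if x = l then p else x) ` Vt \<subseteq> Vt - {l}"
        using l by auto
      show "0 \<le> (if x = l then w {l,p} else 0)" for x
        using less.prems(2) l(4) by simp
      show "tree_dist Et w x x = 0" if "x \<in> Vt" for x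
        using T that by (rule tree_dist_self)
      show "tree_dist Et w x y = (if x = l then w {l,p} else 0) + (if y = l then w {l,p} else 0) +
          tree_dist (Et - {{l,p}}) w (if x = l then p else x) (if y = l then p else y)"
        if "x \<in> Vt" "y \<in> Vt" "x \<noteq> y" for x y
        using T l(1-3) pendant that by (rule tree_dist_pendant)
    qed
  qed
qed

definition distance_graph :: "'a set \<Rightarrow> ('a \<Rightarrow> 'a \<Rightarrow> real) \<Rightarrow> real set \<Rightarrow> 'a set set" where
  "distance_graph V D I = {{u,v} | u v. u \<in> V \<and> v \<in> V \<and> u \<noteq> v \<and> D u v \<in> I}"

lemma distance_graph_subset: "distance_graph V D I \<subseteq> all_pairs V"
  unfolding distance_graph_def all_pairs_def by fastforce

lemma distance_graph_memI:
  "u \<in> V \<Longrightarrow> v \<in> V \<Longrightarrow> u \<noteq> v \<Longrightarrow> D u v \<in> I \<Longrightarrow> {u,v} \<in> distance_graph V D I"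
  unfolding distance_graph_def by blast

lemma mem_distance_graph:
  assumes "four_point_metric V D"
  shows "{u,v} \<in> distance_graph V D I \<longleftrightarrow> u \<in> V \<and> v \<in> V \<and> u \<noteq> v \<and> D u v \<in> I"
proof
  assume "{u,v} \<in> distance_graph V D I"
  then obtain a b where "{u,v} = {a,b}" "a \<in> V" "b \<in> V" "a \<noteq> b" "D a b \<in> I"
    unfolding distance_graph_def by blast
  then show "u \<in> V \<and> v \<in> V \<and> u \<noteq> v \<and> D u v \<in> I"
    using four_point_metric_sym[OF assms] by (auto simp: doubleton_eq_iff)
qed (auto intro: distance_graph_memI)

lemma is_PCG_distance_graph:
  assumes "is_PCG V E"
  obtains D I where "four_point_metric V D" "real_interval I" "E = distance_graph V D I"
proof -
  obtain Vt Et w and f :: "'a \<Rightarrow> nat" and I where T: "is_tree Vt Et" and w: "\<forall>e\<in>Et. w e \<ge> 0"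
    and f: "bij_betw f V (tree_leaves Vt Et)" and I: "real_interval I"
    and E: "E \<subseteq> all_pairs V"
    and edges: "\<forall>u\<in>V. \<forall>v\<in>V. u \<noteq> v \<longrightarrow> ({u,v} \<in> E \<longleftrightarrow> tree_dist Et w (f u) (f v) \<in> I)"
    using assms unfolding is_PCG_def by blast
  define D where "D x y = tree_dist Et w (f x) (f y)" for x y
  have "f ` V \<subseteq> Vt"
    using f unfolding bij_betw_def tree_leaves_def by blast
  then have fpm: "four_point_metric V D"
    unfolding D_def by (rule four_point_metric_comp[OF tree_dist_four_point_metric[OF T w]])
  have "E = distance_graph V D I"
  proof
    show "E \<subseteq> distance_graph V D I"
    proof
      fix e assume "e \<in> E"
      moreover from this obtain u v where "e = {u,v}" "u \<in> V" "v \<in> V" "u \<noteq> v"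
        using E unfolding all_pairs_def by blast
      ultimately show "e \<in> distance_graph V D I"
        using edges unfolding D_def distance_graph_def by blast
    qed
    show "distance_graph V D I \<subseteq> E"
      using edges unfolding D_def distance_graph_def by blast
  qed
  with fpm I show thesis
    by (rule that)
qed

lemma is_k_AND_PCG_distance_graphs:
  assumes "is_k_AND_PCG k V E"
  obtains D I where "\<And>i. i < k \<Longrightarrow> four_point_metric V (D i)" "\<And>i. i < k \<Longrightarrow> real_interval (I i)"
    "E = (\<Inter>i\<in>{..<k}. distance_graph V (D i) (I i))"
proof -
  obtain Es where PCG: "\<forall>i<k. is_PCG V (Es i)" and E: "E = (\<Inter>i\<in>{..<k}. Es i)"
    using assms unfolding is_k_AND_PCG_def by blast
  have "\<forall>i\<in>{..<k}. \<exists>D I. four_point_metric V D \<and> real_interval I \<and> Es i = distance_graph V D I"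
  proof
    fix i assume "i \<in> {..<k}"
    then have "is_PCG V (Es i)"
      using PCG by simp
    then obtain D I where "four_point_metric V D" "real_interval I" "Es i = distance_graph V D I"
      by (rule is_PCG_distance_graph)
    then show "\<exists>D I. four_point_metric V D \<and> real_interval I \<and> Es i = distance_graph V D I"
      by blast
  qed
  from bchoice[OF this] obtain D where
    "\<forall>i\<in>{..<k}. \<exists>I. four_point_metric V (D i) \<and> real_interval I \<and> Es i = distance_graph V (D i) I"
    by blast
  from bchoice[OF this] obtain I where rep:
    "\<forall>i\<in>{..<k}. four_point_metric V (D i) \<and> real_interval (I i) \<and> Es i = distance_graph V (D i) (I i)"
    by blast
  show thesis
  proof (rule that[of D I])
    show "four_point_metric V (D i)" "real_interval (I i)" if "i < k" for i
      using rep that by simp_all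
    show "E = (\<Inter>i\<in>{..<k}. distance_graph V (D i) (I i))"
      using rep unfolding E by (intro INF_cong) simp_all
  qed
qed

definition strictly_below :: "real set \<Rightarrow> real set" where
  "strictly_below I = {x. \<forall>y\<in>I. x < y}"

definition strictly_above :: "real set \<Rightarrow> real set" where
  "strictly_above I = {x. \<forall>y\<in>I. y < x}"

lemma real_interval_not_mem:
  assumes "real_interval I" "x \<notin> I"
  shows "x \<in> strictly_below I \<or> x \<in> strictly_above I"
proof (rule ccontr)
  assume "\<not> ?thesis"
  then obtain y z where "y \<in> I" "z \<in> I" "y \<le> x" "x \<le> z"
    unfolding strictly_below_def strictly_above_def by (auto simp: not_less)
  then show False
    using assms unfolding real_interval_def by blast
qed

lemma strictly_below_less: "x \<in> strictly_below I \<Longrightarrow> y \<notin> strictly_below I \<Longrightarrow> x < y"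
  unfolding strictly_below_def by force

lemma strictly_below_disjoint: "x \<in> I \<Longrightarrow> x \<notin> strictly_below I"
  unfolding strictly_below_def by blast

lemma two_long_pairs_violate_four_point:
  assumes fpm: "four_point_metric V D" and V: "a \<in> V" "b \<in> V" "c \<in> V" "d \<in> V"
    and long: "D a b \<in> strictly_above I" "D c d \<in> strictly_above I"
    and cross: "D a c \<in> I" "D a d \<in> I" "D b c \<in> I" "D b d \<in> I"
  shows False
proof -
  have "D a c < D a b" "D a d < D a b" "D b d < D c d" "D b c < D c d"
    using long cross unfolding strictly_above_def by auto
  then show False
    using four_point_metric_four_point[OF fpm V] by (simp add: max_def split: if_splits)
qed

lemma cycle_edge: "is_cycle S c \<Longrightarrow> Suc i < length c \<Longrightarrow> {c ! i, c ! Suc i} \<in> S"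
  unfolding is_cycle_def set_consec_edges by blast

lemma cycle_closing_edge:
  assumes "is_cycle S c"
  shows "{c ! 0, c ! (length c - 1)} \<in> S"
proof -
  have "c \<noteq> []" "{last c, hd c} \<in> S"
    using assms unfolding is_cycle_def by auto
  then show ?thesis
    by (simp add: hd_conv_nth last_conv_nth insert_commute)
qed

lemma cycle_vertices:
  assumes c: "is_cycle S c" and S: "S \<subseteq> all_pairs V"
  shows "set c \<subseteq> V"
proof
  fix x assume "x \<in> set c"
  then obtain i where i: "i < length c" "x = c ! i"
    by (metis in_set_conv_nth)
  have "3 \<le> length c"
    using c unfolding is_cycle_def by simp
  obtain e where "e \<in> S" "x \<in> e"
  proof (cases "Suc i < length c")
    case True
    then show ?thesis
      using that cycle_edge[OF c True] i(2) by blast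
  next
    case False
    then have "Suc (i - 1) < length c" "Suc (i - 1) = i"
      using i(1) \<open>3 \<le> length c\<close> by auto
    then show ?thesis
      using that cycle_edge[OF c, of "i - 1"] i(2) by (metis insertI2 singletonI)
  qed
  then show "x \<in> V"
    using S unfolding all_pairs_def by auto
qed

lemma shortest_cycle_chordless:
  assumes c: "is_cycle S c" and shortest: "\<And>c'. is_cycle S c' \<Longrightarrow> length c \<le> length c'"
    and ij: "i + 2 \<le> j" "j < length c" and chord: "{c ! j, c ! i} \<in> S"
  shows "i = 0 \<and> j = length c - 1"
proof -
  have "distinct c" "set (consec_edges c) \<subseteq> S"
    using c unfolding is_cycle_def by simp_all
  then have "is_cycle S (drop i (take (Suc j) c))"
    using ij chord by (rule is_cycle_segment)
  then have "length c \<le> Suc j - i"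
    using shortest ij by fastforce
  then show ?thesis
    using ij by linarith
qed

text \<open>Along the cycle, the four-point condition makes \<open>D (v 0) (v j) - D (v 1) (v j)\<close>
  nondecreasing in \<open>j\<close>, but it is positive at \<open>j = 2\<close> and negative at \<open>j = n - 1\<close>.\<close>
lemma four_point_no_chordless_cycle:
  fixes v :: "nat \<Rightarrow> 'a"
  assumes fpm: "four_point_metric V D" and V: "\<And>i. i < n \<Longrightarrow> v i \<in> V" and "4 \<le> n"
    and L: "\<And>x y. x \<in> L \<Longrightarrow> y \<notin> L \<Longrightarrow> x < y"
    and path: "\<And>i. Suc i < n \<Longrightarrow> D (v i) (v (Suc i)) \<in> L"
    and closing: "D (v 0) (v (n - 1)) \<in> L"
    and chord0: "\<And>j. 2 \<le> j \<Longrightarrow> j + 2 \<le> n \<Longrightarrow> D (v 0) (v j) \<notin> L"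
    and chord1: "\<And>j. 3 \<le> j \<Longrightarrow> j < n \<Longrightarrow> D (v 1) (v j) \<notin> L"
  shows False
proof -
  define g where "g j = D (v 0) (v j) - D (v 1) (v j)" for j
  have step: "g j \<le> g (Suc j)" if j: "2 \<le> j" "j + 2 \<le> n" for j
  proof -
    have "D (v 0) (v 1) < D (v 0) (v j)"
      using L path[of 0] chord0[OF j] j by simp
    moreover have "D (v j) (v (Suc j)) < D (v 1) (v (Suc j))"
      using L path[of j] chord1[of "Suc j"] j by simp
    moreover have "D (v 0) (v j) + D (v 1) (v (Suc j))
        \<le> max (D (v 0) (v 1) + D (v j) (v (Suc j))) (D (v 0) (v (Suc j)) + D (v j) (v 1))"
      using four_point_metric_four_point[OF fpm V V V V] j by simp
    moreover have "D (v j) (v 1) = D (v 1) (v j)"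
      using four_point_metric_sym[OF fpm V V] j by simp
    ultimately show ?thesis
      unfolding g_def by (simp add: max_def split: if_splits)
  qed
  have "g 2 \<le> g (n - 1)"
  proof (rule dec_induct)
    show "2 \<le> n - 1"
      using \<open>4 \<le> n\<close> by simp
    show "g 2 \<le> g (Suc j)" if "2 \<le> j" "j < n - 1" "g 2 \<le> g j" for j
      using step[of j] that by linarith
  qed simp
  moreover have "D (v 1) (v 2) < D (v 0) (v 2)"
    using L path[of 1] chord0[of 2] \<open>4 \<le> n\<close> by (simp add: numeral_2_eq_2)
  moreover have "D (v 0) (v (n - 1)) < D (v 1) (v (n - 1))"
    using L closing chord1[of "n - 1"] \<open>4 \<le> n\<close> by simp
  ultimately show False
    unfolding g_def by simp
qed

lemma shortest_cycle_strictly_below_is_triangle: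
  assumes fpm: "four_point_metric V D" and c: "is_cycle (distance_graph V D (strictly_below I)) c"
    and shortest: "\<And>c'. is_cycle (distance_graph V D (strictly_below I)) c' \<Longrightarrow> length c \<le> length c'"
  shows "length c = 3"
proof (rule ccontr)
  let ?S = "distance_graph V D (strictly_below I)"
  let ?n = "length c"
  assume "?n \<noteq> 3"
  moreover have "3 \<le> ?n" "distinct c"
    using c unfolding is_cycle_def by simp_all
  ultimately have "4 \<le> ?n"
    by simp
  then have "c \<noteq> []"
    by auto
  have V: "c ! i \<in> V" if "i < ?n" for i
    using cycle_vertices[OF c distance_graph_subset] that by (meson nth_mem subsetD)
  have edge_iff: "{c ! i, c ! j} \<in> ?S \<longleftrightarrow> D (c ! i) (c ! j) \<in> strictly_below I"
    if "i < ?n" "j < ?n" "i \<noteq> j" for i j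
    using mem_distance_graph[OF fpm] V that \<open>distinct c\<close>
    by (simp add: nth_eq_iff_index_eq)
  have no_chord: "D (c ! i) (c ! j) \<notin> strictly_below I"
    if ij: "i + 2 \<le> j" "j < ?n" and "i \<noteq> 0 \<or> j \<noteq> ?n - 1" for i j
  proof
    assume "D (c ! i) (c ! j) \<in> strictly_below I"
    then have "{c ! j, c ! i} \<in> ?S"
      using edge_iff[of i j] ij by (simp add: insert_commute)
    from shortest_cycle_chordless[OF c shortest ij this] show False
      using that(3) by simp
  qed
  show False
  proof (rule four_point_no_chordless_cycle[OF fpm, of ?n "\<lambda>i. c ! i" "strictly_below I"])
    show "\<And>i. i < ?n \<Longrightarrow> c ! i \<in> V" "4 \<le> ?n"
      by (fact V, fact)
    show "\<And>x y. x \<in> strictly_below I \<Longrightarrow> y \<notin> strictly_below I \<Longrightarrow> x < y"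
      by (rule strictly_below_less)
    show "D (c ! i) (c ! Suc i) \<in> strictly_below I" if "Suc i < ?n" for i
      using edge_iff[of i "Suc i"] cycle_edge[OF c that] that by simp
    show "D (c ! 0) (c ! (?n - 1)) \<in> strictly_below I"
      using edge_iff[of 0 "?n - 1"] cycle_closing_edge[OF c] \<open>4 \<le> ?n\<close> \<open>c \<noteq> []\<close> by simp
    show "D (c ! 0) (c ! j) \<notin> strictly_below I" if "2 \<le> j" "j + 2 \<le> ?n" for j
      using no_chord[of 0 j] that by simp
    show "D (c ! 1) (c ! j) \<notin> strictly_below I" if "3 \<le> j" "j < ?n" for j
      using no_chord[of 1 j] that by simp
  qed
qed

lemma distance_graph_strictly_below_acyclic:
  fixes side :: "'a \<Rightarrow> bool"
  assumes fpm: "four_point_metric V D"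
    and bipartite: "\<And>u v. u \<in> V \<Longrightarrow> v \<in> V \<Longrightarrow> u \<noteq> v \<Longrightarrow> side u = side v \<Longrightarrow> D u v \<notin> strictly_below I"
  shows "\<nexists>c. is_cycle (distance_graph V D (strictly_below I)) c"
proof
  let ?S = "distance_graph V D (strictly_below I)"
  assume "\<exists>c. is_cycle ?S c"
  then obtain c where c: "is_cycle ?S c" and shortest: "\<And>c'. is_cycle ?S c' \<Longrightarrow> length c \<le> length c'"
    using ex_has_least_nat[of "is_cycle ?S" _ length] by metis
  then have "length c = 3"
    using fpm by (intro shortest_cycle_strictly_below_is_triangle)
  then obtain a b d where abd: "c = [a, b, d]"
    by (auto simp: numeral_3_eq_3 length_Suc_conv)
  then have "{a,b} \<in> ?S" "{b,d} \<in> ?S" "{a,d} \<in> ?S"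
    using c unfolding is_cycle_def by (auto simp: insert_commute)
  then have "D a b \<in> strictly_below I \<and> D b d \<in> strictly_below I \<and> D a d \<in> strictly_below I \<and>
      a \<in> V \<and> b \<in> V \<and> d \<in> V \<and> a \<noteq> b \<and> b \<noteq> d \<and> a \<noteq> d"
    using mem_distance_graph[OF fpm] by simp
  then show False
    using bipartite by (cases "side a"; cases "side b"; cases "side d") blast+
qed

definition H3_copy :: "nat \<Rightarrow> (nat \<times> bool \<times> nat) set" where
  "H3_copy c = {c} \<times> UNIV \<times> {0..<4}"

lemma H3_E_iff: "{(c,s,i), (c',s',i')} \<in> H3_E \<longleftrightarrow> c = c' \<and> s' = (\<not> s) \<and> c < 3 \<and> i < 4 \<and> i' < 4"
  unfolding H3_E_def by (auto simp: doubleton_eq_iff)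

lemma H3_copy_subset: "c < 3 \<Longrightarrow> H3_copy c \<subseteq> H3_V"
  unfolding H3_copy_def H3_V_def by auto

lemma finite_H3_copy: "finite (H3_copy c)"
  unfolding H3_copy_def by simp

lemma card_H3_copy: "card (H3_copy c) = 8"
  unfolding H3_copy_def by (simp add: card_cartesian_product)

lemma card_H3_copy_edges: "card {{(c,True,i), (c,False,j)} | i j. i < (4::nat) \<and> j < (4::nat)} = 16"
proof -
  have "{{(c,True,i), (c,False,j)} | i j. i < (4::nat) \<and> j < (4::nat)} =
      (\<lambda>(i,j). {(c,True,i), (c,False,j)}) ` ({0..<4} \<times> {0..<4})"
    by force
  moreover have "inj_on (\<lambda>(i,j). {(c,True,i), (c,False,j)}) ({0..<4::nat} \<times> {0..<4::nat})"
    by (auto simp: inj_on_def doubleton_eq_iff)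
  ultimately show ?thesis
    by (simp add: card_image card_cartesian_product)
qed

lemma H3_copy_edges_not_two_forests:
  assumes "S \<subseteq> all_pairs (H3_copy c)" "S' \<subseteq> all_pairs (H3_copy c)"
    and "\<nexists>cy. is_cycle S cy" "\<nexists>cy. is_cycle S' cy"
  shows "\<not> {{(c,True,i), (c,False,j)} | i j. i < (4::nat) \<and> j < (4::nat)} \<subseteq> S \<union> S'"
proof
  assume cover: "{{(c,True,i), (c,False,j)} | i j. i < (4::nat) \<and> j < (4::nat)} \<subseteq> S \<union> S'"
  have "finite (S \<union> S')"
    using assms(1,2) finite_all_pairs[OF finite_H3_copy] finite_subset by blast
  from card_mono[OF this cover] have "16 \<le> card (S \<union> S')"
    unfolding card_H3_copy_edges .
  moreover have "H3_copy c \<noteq> {}"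
    using card_H3_copy[of c] by auto
  then have "card (S \<union> S') < 2 * card (H3_copy c) - 1"
    using finite_H3_copy assms by (intro card_acyclic_union_less)
  ultimately show False
    unfolding card_H3_copy by simp
qed

lemma H3_long_edges_in_one_copy:
  assumes fpm: "four_point_metric H3_V D"
    and nonedge: "\<And>u v. u \<in> H3_V \<Longrightarrow> v \<in> H3_V \<Longrightarrow> u \<noteq> v \<Longrightarrow> {u,v} \<notin> H3_E \<Longrightarrow> D u v \<in> I"
    and bounds: "c < 3" "c' < 3" "i < 4" "j < 4" "i' < 4" "j' < 4"
    and long: "D (c,s,i) (c,\<not>s,j) \<in> strictly_above I" "D (c',s',i') (c',\<not>s',j') \<in> strictly_above I"
  shows "c = c'"
proof (rule ccontr)
  assume "c \<noteq> c'"
  have V: "(c,s,i) \<in> H3_V" "(c,\<not>s,j) \<in> H3_V" "(c',s',i') \<in> H3_V" "(c',\<not>s',j') \<in> H3_V"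
    using bounds by (simp_all add: H3_V_def)
  have "D (c,s,i) (c',s',i') \<in> I" "D (c,s,i) (c',\<not>s',j') \<in> I"
    "D (c,\<not>s,j) (c',s',i') \<in> I" "D (c,\<not>s,j) (c',\<not>s',j') \<in> I"
    using nonedge V \<open>c \<noteq> c'\<close> by (simp_all add: H3_E_iff)
  then show False
    using two_long_pairs_violate_four_point[OF fpm V long] by blast
qed

lemma H3_copy_short_edges_acyclic:
  assumes fpm: "four_point_metric H3_V D"
    and nonedge: "\<And>u v. u \<in> H3_V \<Longrightarrow> v \<in> H3_V \<Longrightarrow> u \<noteq> v \<Longrightarrow> {u,v} \<notin> H3_E \<Longrightarrow> D u v \<in> I"
    and "c < 3"
  shows "\<nexists>cy. is_cycle (distance_graph (H3_copy c) D (strictly_below I)) cy"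
proof (rule distance_graph_strictly_below_acyclic[where side = "\<lambda>(c,s,i). s"])
  show "four_point_metric (H3_copy c) D"
    using fpm H3_copy_subset[OF \<open>c < 3\<close>] by (rule four_point_metric_subset)
  show "D u v \<notin> strictly_below I"
    if "u \<in> H3_copy c" "v \<in> H3_copy c" "u \<noteq> v" "(case u of (c,s,i) \<Rightarrow> s) = (case v of (c,s,i) \<Rightarrow> s)"
    for u v
  proof -
    have "u \<in> H3_V" "v \<in> H3_V" "{u,v} \<notin> H3_E"
      using that H3_copy_subset[OF \<open>c < 3\<close>] by (auto simp: H3_E_iff)
    then show ?thesis
      using nonedge \<open>u \<noteq> v\<close> strictly_below_disjoint by blast
  qed
qed

lemma H3_copy_without_long_edge:
  fixes D :: "nat \<Rightarrow> (nat \<times> bool \<times> nat) \<Rightarrow> (nat \<times> bool \<times> nat) \<Rightarrow> real"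
  assumes fpm: "\<And>k. k < 2 \<Longrightarrow> four_point_metric H3_V (D k)"
    and nonedge: "\<And>k u v. k < 2 \<Longrightarrow> u \<in> H3_V \<Longrightarrow> v \<in> H3_V \<Longrightarrow> u \<noteq> v \<Longrightarrow> {u,v} \<notin> H3_E \<Longrightarrow>
        D k u v \<in> I k"
  shows "\<exists>c<3. \<forall>k<2. \<forall>s i j. i < 4 \<longrightarrow> j < 4 \<longrightarrow> D k (c,s,i) (c,\<not>s,j) \<notin> strictly_above (I k)"
proof -
  define long where "long k c \<longleftrightarrow> (\<exists>s i j. i < 4 \<and> j < 4 \<and> D k (c,s,i) (c,\<not>s,j) \<in> strictly_above (I k))"
    for k c
  have one_copy: "c = c'" if k: "k < 2" and "c < 3" "c' < 3" "long k c" "long k c'" for k c c'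
  proof -
    obtain s i j where "i < 4" "j < 4" "D k (c,s,i) (c,\<not>s,j) \<in> strictly_above (I k)"
      using \<open>long k c\<close> unfolding long_def by blast
    moreover obtain s' i' j' where "i' < 4" "j' < 4" "D k (c',s',i') (c',\<not>s',j') \<in> strictly_above (I k)"
      using \<open>long k c'\<close> unfolding long_def by blast
    ultimately show ?thesis
      using H3_long_edges_in_one_copy[OF fpm[OF k] nonedge[OF k] \<open>c < 3\<close> \<open>c' < 3\<close>] by blast
  qed
  have "\<exists>c<3. \<not> long 0 c \<and> \<not> long 1 c"
  proof (rule ccontr)
    assume "\<not> ?thesis"
    then have "long 0 c \<or> long 1 c" if "c < 3" for c
      using that by blast
    from this[of 0] this[of 1] this[of 2] show False
      using one_copy[of 0 0 1] one_copy[of 0 0 2] one_copy[of 0 1 2]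
        one_copy[of 1 0 1] one_copy[of 1 0 2] one_copy[of 1 1 2]
      by simp blast
  qed
  then obtain c where c: "c < 3" "\<not> long 0 c" "\<not> long 1 c"
    by blast
  have "D k (c,s,i) (c,\<not>s,j) \<notin> strictly_above (I k)" if "k < 2" "i < 4" "j < 4" for k s i j
  proof -
    from \<open>k < 2\<close> have "\<not> long k c"
      using c by (auto simp: less_2_cases_iff)
    then show ?thesis
      using that unfolding long_def by blast
  qed
  with c(1) show ?thesis
    by blast
qed

lemma H3_edges_not_separated:
  fixes D :: "nat \<Rightarrow> (nat \<times> bool \<times> nat) \<Rightarrow> (nat \<times> bool \<times> nat) \<Rightarrow> real"
  assumes fpm: "\<And>k. k < 2 \<Longrightarrow> four_point_metric H3_V (D k)"
    and I: "\<And>k. k < 2 \<Longrightarrow> real_interval (I k)"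
    and nonedge: "\<And>k u v. k < 2 \<Longrightarrow> u \<in> H3_V \<Longrightarrow> v \<in> H3_V \<Longrightarrow> u \<noteq> v \<Longrightarrow> {u,v} \<notin> H3_E \<Longrightarrow>
        D k u v \<in> I k"
    and edge: "\<And>u v. u \<in> H3_V \<Longrightarrow> v \<in> H3_V \<Longrightarrow> u \<noteq> v \<Longrightarrow> {u,v} \<in> H3_E \<Longrightarrow> \<exists>k<2. D k u v \<notin> I k"
  shows False
proof -
  obtain c where c: "c < 3"
    and no_long: "\<And>k s i j. k < 2 \<Longrightarrow> i < 4 \<Longrightarrow> j < 4 \<Longrightarrow> D k (c,s,i) (c,\<not>s,j) \<notin> strictly_above (I k)"
    using H3_copy_without_long_edge[of D I, OF fpm nonedge] by blast
  define S where "S k = distance_graph (H3_copy c) (D k) (strictly_below (I k))" for k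
  have covered: "{(c,True,i), (c,False,j)} \<in> S 0 \<union> S 1" if ij: "i < 4" "j < 4" for i j
  proof -
    obtain k where k: "k < 2" "D k (c,True,i) (c,False,j) \<notin> I k"
      using edge[of "(c,True,i)" "(c,False,j)"] c ij by (auto simp: H3_V_def H3_E_iff)
    then have "D k (c,True,i) (c,False,j) \<in> strictly_below (I k)"
      using real_interval_not_mem[OF I[OF k(1)]] no_long[OF k(1) ij, of True] by auto
    then have "{(c,True,i), (c,False,j)} \<in> S k"
      unfolding S_def using ij by (intro distance_graph_memI) (auto simp: H3_copy_def)
    then show ?thesis
      using k(1) by (auto simp: less_2_cases_iff)
  qed
  have acyclic: "\<nexists>cy. is_cycle (S k) cy" if "k < 2" for k
    unfolding S_def using fpm[OF that] nonedge[OF that] c by (rule H3_copy_short_edges_acyclic)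
  have forests: "S k \<subseteq> all_pairs (H3_copy c)" for k
    unfolding S_def by (rule distance_graph_subset)
  have "\<not> {{(c,True,i), (c,False,j)} | i j. i < (4::nat) \<and> j < (4::nat)} \<subseteq> S 0 \<union> S 1"
    using forests acyclic by (intro H3_copy_edges_not_two_forests) simp_all
  then show False
    using covered by blast
qed

lemma H3_compl_ne_Inter_distance_graphs:
  fixes D :: "nat \<Rightarrow> (nat \<times> bool \<times> nat) \<Rightarrow> (nat \<times> bool \<times> nat) \<Rightarrow> real"
  assumes fpm: "\<And>k. k < 2 \<Longrightarrow> four_point_metric H3_V (D k)"
    and I: "\<And>k. k < 2 \<Longrightarrow> real_interval (I k)"
  shows "H3_compl_E \<noteq> (\<Inter>k\<in>{..<2}. distance_graph H3_V (D k) (I k))"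
proof
  assume compl: "H3_compl_E = (\<Inter>k\<in>{..<2}. distance_graph H3_V (D k) (I k))"
  have separated: "{u,v} \<notin> H3_E \<longleftrightarrow> (\<forall>k<2. D k u v \<in> I k)"
    if uv: "u \<in> H3_V" "v \<in> H3_V" "u \<noteq> v" for u v
  proof -
    have "{u,v} \<in> distance_graph H3_V (D k) (I k) \<longleftrightarrow> D k u v \<in> I k" if "k < 2" for k
      using mem_distance_graph[OF fpm[OF that]] uv by simp
    moreover have "{u,v} \<in> H3_compl_E \<longleftrightarrow> {u,v} \<notin> H3_E"
      using uv unfolding H3_compl_E_def all_pairs_def by blast
    ultimately show ?thesis
      unfolding compl by auto
  qed
  show False
  proof (rule H3_edges_not_separated[of D I, OF fpm I])
    show "D k u v \<in> I k" if "k < 2" "u \<in> H3_V" "v \<in> H3_V" "u \<noteq> v" "{u,v} \<notin> H3_E" for k u v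
      using separated[OF that(2-4)] that(1,5) by simp
    show "\<exists>k<2. D k u v \<notin> I k" if "u \<in> H3_V" "v \<in> H3_V" "u \<noteq> v" "{u,v} \<in> H3_E" for u v
      using separated[OF that(1-3)] that(4) by simp
  qed
qed

theorem theorem12:
  shows "\<not> is_k_AND_PCG 2 H3_V H3_compl_E"
proof
  assume "is_k_AND_PCG 2 H3_V H3_compl_E"
  then show False
  proof (rule is_k_AND_PCG_distance_graphs)
    fix D I
    assume "\<And>i. i < (2::nat) \<Longrightarrow> four_point_metric H3_V (D i)" "\<And>i. i < (2::nat) \<Longrightarrow> real_interval (I i)"
      "H3_compl_E = (\<Inter>i\<in>{..<2::nat}. distance_graph H3_V (D i) (I i))"
    then show False
      using H3_compl_ne_Inter_distance_graphs[of D I] by blast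
  qed
qed

end
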